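(* Let $\mathbf{A}\in\mathbb{R}^{M\times N}$ with rows $\mathbf{a}_1^T,\dots,\mathbf{a}_M^T$, let $\sigma_n^2>0$, and let $\bar{\alpha}_t\in(0,1)$. Let $Q:\mathbb{R}\to\mathcal{R}$ be an element-wise scalar quantizer such that each codeword $r\in\mathcal{R}$ corresponds to an interval $Q^{-1}(r)=[r^{\mathrm{low}},r^{\mathrm{up}})$ with $-\infty\le r^{\mathrm{low}}<r^{\mathrm{up}}\le+\infty$, and let the quantized observation be $\bar{\mathbf{y}}=Q(\mathbf{A}\mathbf{h}_0+\mathbf{n})$ with $\mathbf{n}\sim\mathcal{N}(\mathbf{0},\sigma_n^2\mathbf{I})$ independent of $\mathbf{h}_0$. For $\mathbf{h}_t\in\mathbb{R}^N$ define the noise-perturbed likelihood $p_t(\bar{\mathbf{y}}\mid\mathbf{h}_t)=\int p(\bar{\mathbf{y}}\mid\mathbf{h}_0)\,q(\mathbf{h}_0\mid\mathbf{h}_t)\,\mathrm{d}\mathbf{h}_0$, where, under the uninformative-prior assumption, $q(\mathbf{h}_0\mid\mathbf{h}_t)=\mathcal{N}\big(\mathbf{h}_0;\tfrac{1}{\sqrt{\bar{\alpha}_t}}\mathbf{h}_t,\tfrac{1-\bar{\alpha}_t}{\bar{\alpha}_t}\mathbf{I}\big)$. Assume $\mathbf{A}$ is row-orthogonal, i.e. $\mathbf{A}\mathbf{A}^T$ is diagonal. Then $$\nabla_{\mathbf{h}_t}\log p_t(\bar{\mathbf{y}}\mid\mathbf{h}_t)=\frac{1}{\sqrt{\bar{\alpha}_t}}\mathbf{A}^T\mathbf{g},$$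 where $\mathbf{g}=[g_1,\dots,g_M]^T$ with $$g_m=\frac{\exp\big(-\tfrac{(\tilde{y}_m^{\mathrm{low}})^2}{2}\big)-\exp\big(-\tfrac{(\tilde{y}_m^{\mathrm{up}})^2}{2}\big)}{\sqrt{2\pi}\,\tilde{\sigma}_m\big(\Phi(\tilde{y}_m^{\mathrm{up}})-\Phi(\tilde{y}_m^{\mathrm{low}})\big)},\qquad \tilde{y}_m^{\mathrm{up}}=\frac{\bar{y}_m^{\mathrm{up}}-z_m}{\tilde{\sigma}_m},\quad \tilde{y}_m^{\mathrm{low}}=\frac{\bar{y}_m^{\mathrm{low}}-z_m}{\tilde{\sigma}_m},$$ $z_m$ is the $m$-th entry of $\mathbf{z}_t=\frac{1}{\sqrt{\bar{\alpha}_t}}\mathbf{A}\mathbf{h}_t$, $\tilde{\sigma}_m^2=\frac{1-\bar{\alpha}_t}{\bar{\alpha}_t}\|\mathbf{a}_m^T\|_2^2+\sigma_n^2$, $\bar{y}_m^{\mathrm{low}}$ and $\bar{y}_m^{\mathrm{up}}$ are the lower and upper thresholds of the interval associated with the codeword $\bar{y}_m$ (the $m$-th entry of $\bar{\mathbf{y}}$), and $\Phi(u)=\frac{1}{\sqrt{2\pi}}\int_{-\infty}^u e^{-z^2/2}\,\mathrm{d}z$ (with $\exp(-(\pm\infty)^2/2)=0$, $\Phi(-\infty)=0$, $\Phi(+\infty)=1$).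
   Context: Here $\mathbf{h}_t$ is the latent variable of a diffusion model at step $t$ with $\mathbf{h}_t=\sqrt{\bar{\alpha}_t}\mathbf{h}_0+\sqrt{1-\bar{\alpha}_t}\boldsymbol{\epsilon}$, $\boldsymbol{\epsilon}\sim\mathcal{N}(\mathbf{0},\mathbf{I})$; the "uninformative prior" assumption means that the posterior $p(\mathbf{h}_0\mid\mathbf{h}_t)\propto p(\mathbf{h}_t\mid\mathbf{h}_0)p_0(\mathbf{h}_0)$ is replaced by $p(\mathbf{h}_t\mid\mathbf{h}_0)$ viewed as a density in $\mathbf{h}_0$, which is the Gaussian $q$ given in the claim. Equivalently, $\bar{\mathbf{y}}=Q(\frac{1}{\sqrt{\bar{\alpha}_t}}\mathbf{A}\mathbf{h}_t+\tilde{\mathbf{n}})$ with $\tilde{\mathbf{n}}\sim\mathcal{N}(\mathbf{0},\frac{1-\bar{\alpha}_t}{\bar{\alpha}_t}\mathbf{A}\mathbf{A}^T+\sigma_n^2\mathbf{I})$. *)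

theory Defs
  imports "HOL-Probability.Probability"
begin

definition Phi_e :: "ereal \<Rightarrow> real" where
  "Phi_e u = (case u of
      ereal x \<Rightarrow> 1 / sqrt (2 * pi) * set_lebesgue_integral lborel {..x} (\<lambda>z. exp (- z\<^sup>2 / 2))
    | PInfty \<Rightarrow> 1
    | MInfty \<Rightarrow> 0)"

definition gauss_exp_e :: "ereal \<Rightarrow> real" where
  "gauss_exp_e u = (case u of ereal x \<Rightarrow> exp (- x\<^sup>2 / 2) | PInfty \<Rightarrow> 0 | MInfty \<Rightarrow> 0)"

definition norm_thr :: "ereal \<Rightarrow> real \<Rightarrow> real \<Rightarrow> ereal" where
  "norm_thr u z s = (case u of ereal x \<Rightarrow> ereal ((x - z) / s) | PInfty \<Rightarrow> PInfty | MInfty \<Rightarrow> MInfty)"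

definition quant_lik ::
  "real^'n^'m \<Rightarrow> real \<Rightarrow> (real \<Rightarrow> 'c) \<Rightarrow> 'c^'m \<Rightarrow> real^'n \<Rightarrow> real" where
  "quant_lik A sigma_n Q ybar h0 =
     (\<integral>n. indicator {n::real^'m. \<forall>m. Q ((A *v h0) $ m + n $ m) = ybar $ m} n
            * (\<Prod>m\<in>UNIV. normal_density 0 sigma_n (n $ m)) \<partial>lborel)"

definition pert_lik ::
  "real^'n^'m \<Rightarrow> real \<Rightarrow> real \<Rightarrow> (real \<Rightarrow> 'c) \<Rightarrow> 'c^'m \<Rightarrow> real^'n \<Rightarrow> real" where
  "pert_lik A sigma_n abar Q ybar ht =
     (\<integral>h0. quant_lik A sigma_n Q ybar h0
            * (\<Prod>i\<in>UNIV. normal_density (ht $ i / sqrt abar) (sqrt ((1 - abar) / abar)) (h0 $ i))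
       \<partial>lborel)"

end

theory Submission
  imports Defs "HOL-Library.Numeral_Type"
begin

(* Under the uninformative prior, h0 = h_t / sqrt abar + s w with s^2 = (1 - abar) / abar and w
   standard Gaussian, so the m-th unquantised observation is z_m + s (a_m . w) + n_m.  Since the rows
   a_m are orthogonal, a rotation of w turns the a_m . w into independent centred Gaussians of
   variances |a_m|^2.  The likelihood therefore factorises over m, and each factor is, by the
   convolution of Gaussians, the probability that z_m + sigma_m N(0,1) lies in [low_m, up_m) with
   sigma_m^2 = s^2 |a_m|^2 + sigma_n^2, i.e. Phi(y_up) - Phi(y_low).  Differentiating the logarithm
   of this product with Phi' = phi gives the gradient A^T g / sqrt abar. *)

section \<open>Gaussian masses of sets of reals\<close>

definition normal_mass :: "real \<Rightarrow> real \<Rightarrow> real set \<Rightarrow> ennreal" where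
  "normal_mass \<mu> \<sigma> S = (\<integral>\<^sup>+x. ennreal (normal_density \<mu> \<sigma> x) * indicator S x \<partial>lborel)"

lemma normal_density_standardize:
  "0 < \<sigma> \<Longrightarrow> \<sigma> * normal_density \<mu> \<sigma> (\<mu> + \<sigma> * x) = std_normal_density x"
  by (simp add: normal_density_def real_sqrt_mult power_mult_distrib field_simps)

lemma nn_integral_std_normal_density: "(\<integral>\<^sup>+t. ennreal (std_normal_density t) \<partial>lborel) = 1"
  by (subst nn_integral_eq_integral) auto

lemma borel_measurable_normal_mass [measurable]:
  assumes [measurable]: "S \<in> sets borel"
  shows "(\<lambda>x. normal_mass x \<sigma> S) \<in> borel_measurable borel"
  unfolding normal_mass_def normal_density_def by measurable

lemma normal_mass_standardize:
  assumes \<sigma>: "0 < \<sigma>" and [measurable]: "S \<in> sets borel"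
  shows "normal_mass \<mu> \<sigma> S = (\<integral>\<^sup>+t. ennreal (std_normal_density t) * indicator S (\<mu> + \<sigma> * t) \<partial>lborel)"
proof -
  have "normal_mass \<mu> \<sigma> S
      = (\<integral>\<^sup>+t. ennreal \<sigma> * (ennreal (normal_density \<mu> \<sigma> (\<mu> + \<sigma> * t)) * indicator S (\<mu> + \<sigma> * t)) \<partial>lborel)"
    unfolding normal_mass_def using \<sigma>
    by (subst nn_integral_real_affine[where c=\<sigma> and t=\<mu>]) (auto simp: nn_integral_cmult)
  also have "\<dots> = (\<integral>\<^sup>+t. ennreal (std_normal_density t) * indicator S (\<mu> + \<sigma> * t) \<partial>lborel)"
    using \<sigma> by (simp add: mult.assoc[symmetric] ennreal_mult[symmetric] normal_density_standardize)
  finally show ?thesis .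
qed

lemma normal_mass_shift:
  assumes [measurable]: "S \<in> sets borel"
  shows "normal_mass \<mu> \<sigma> S = (\<integral>\<^sup>+u. ennreal (normal_density 0 \<sigma> u) * indicator S (\<mu> + u) \<partial>lborel)"
  unfolding normal_mass_def
  by (subst nn_integral_real_affine[where c=1 and t=\<mu>]) (auto simp: normal_density_def)

lemma normal_mass_le_1:
  assumes "0 < \<sigma>"
  shows "normal_mass \<mu> \<sigma> S \<le> 1"
proof -
  have "normal_mass \<mu> \<sigma> S \<le> (\<integral>\<^sup>+x. ennreal (normal_density \<mu> \<sigma> x) \<partial>lborel)"
    unfolding normal_mass_def by (intro nn_integral_mono) (auto split: split_indicator)
  also have "\<dots> = 1"
    using assms by (subst nn_integral_eq_integral) auto
  finally show ?thesis .
qed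

lemma normal_mass_convolution:
  assumes \<sigma>: "0 < \<sigma>" and c: "0 \<le> c" and [measurable]: "S \<in> sets borel"
  shows "(\<integral>\<^sup>+t. normal_mass (x + c * t) \<sigma> S * ennreal (std_normal_density t) \<partial>lborel)
       = normal_mass x (sqrt (c\<^sup>2 + \<sigma>\<^sup>2)) S"
proof (cases "c = 0")
  case True
  then show ?thesis
    using \<sigma> by (simp add: nn_integral_cmult nn_integral_std_normal_density)
next
  case False
  with c have c: "0 < c" by simp
  have "(\<integral>\<^sup>+t. normal_mass (x + c * t) \<sigma> S * ennreal (std_normal_density t) \<partial>lborel)
      = (\<integral>\<^sup>+v. normal_mass (x + v) \<sigma> S * ennreal (normal_density 0 c v) \<partial>lborel)"
  proof -
    have "ennreal (std_normal_density t) = ennreal c * ennreal (normal_density 0 c (c * t))" for t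
      using normal_density_standardize[of c 0 t] c by (simp add: ennreal_mult[symmetric])
    then show ?thesis
      using c by (subst (2) nn_integral_real_affine[where c=c and t=0])
        (auto simp: nn_integral_cmult[symmetric] ac_simps intro!: nn_integral_cong)
  qed
  also have "\<dots> = (\<integral>\<^sup>+v. \<integral>\<^sup>+y. ennreal (normal_density 0 \<sigma> (y - x - v) * normal_density 0 c v)
                                * indicator S y \<partial>lborel \<partial>lborel)"
  proof -
    have "normal_density (x + v) \<sigma> y = normal_density 0 \<sigma> (y - x - v)" for v y
      by (simp add: normal_density_def diff_diff_eq)
    then show ?thesis
      unfolding normal_mass_def
      by (intro nn_integral_cong, subst nn_integral_multc[symmetric])
        (auto simp: ennreal_mult ac_simps intro!: nn_integral_cong)
  qed
  also have "\<dots> = (\<integral>\<^sup>+y. (\<integral>\<^sup>+v. ennreal (normal_density 0 \<sigma> (y - x - v) * normal_density 0 c v) \<partial>lborel)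
                         * indicator S y \<partial>lborel)"
    by (subst lborel_pair.Fubini') (auto simp: nn_integral_multc)
  also have "\<dots> = normal_mass x (sqrt (c\<^sup>2 + \<sigma>\<^sup>2)) S"
  proof -
    have "(\<integral>\<^sup>+v. ennreal (normal_density 0 \<sigma> (y - x - v) * normal_density 0 c v) \<partial>lborel)
        = ennreal (normal_density x (sqrt (c\<^sup>2 + \<sigma>\<^sup>2)) y)" for y
      using fun_cong[OF conv_normal_density_zero_mean[OF \<sigma> c], of "y - x"]
      by (simp add: normal_density_def add.commute)
    then show ?thesis
      by (simp add: normal_mass_def)
  qed
  finally show ?thesis .
qed

section \<open>The extended standard normal distribution function\<close>

lemma Phi_e_ereal: "Phi_e (ereal x) = (\<integral>t. std_normal_density t * indicator {..x} t \<partial>lborel)"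
proof -
  have "Phi_e (ereal x) = 1 / sqrt (2 * pi) * (\<integral>t. indicator {..x} t * exp (- t\<^sup>2 / 2) \<partial>lborel)"
    by (simp add: Phi_e_def set_lebesgue_integral_def)
  then show ?thesis
    by (simp flip: integral_mult_right_zero add: std_normal_density_def ac_simps)
qed

lemma normal_mass_std_less: "normal_mass 0 1 {t. ereal t < E} = ennreal (Phi_e E)"
proof (cases E)
  case (real x)
  have "normal_mass 0 1 {t. ereal t < E}
      = (\<integral>\<^sup>+t. ennreal (std_normal_density t * indicator {..x} t) \<partial>lborel)"
    unfolding normal_mass_def
    using AE_lborel_singleton[of x]
    by (intro nn_integral_cong_AE, eventually_elim) (auto simp: real split: split_indicator)
  also have "\<dots> = ennreal (Phi_e E)"
    by (subst nn_integral_eq_integral) (auto simp: Phi_e_ereal real intro!: integrable_real_mult_indicator)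
  finally show ?thesis .
qed (simp_all add: Phi_e_def normal_mass_def nn_integral_std_normal_density)

lemma Phi_e_nonneg: "0 \<le> Phi_e E"
proof (cases E)
  case (real x)
  then show ?thesis
    unfolding real Phi_e_ereal by (auto intro!: integral_nonneg_AE)
qed (simp_all add: Phi_e_def)

lemma normal_mass_std_interval:
  assumes "L \<le> U"
  shows "normal_mass 0 1 {t. L \<le> ereal t \<and> ereal t < U} = ennreal (Phi_e U - Phi_e L)"
proof -
  have "ennreal (Phi_e U) = ennreal (Phi_e L) + normal_mass 0 1 {t. L \<le> ereal t \<and> ereal t < U}"
    unfolding normal_mass_std_less[symmetric] normal_mass_def using assms
    by (subst nn_integral_add[symmetric]) (auto intro!: nn_integral_cong split: split_indicator)
  then have "normal_mass 0 1 {t. L \<le> ereal t \<and> ereal t < U} = ennreal (Phi_e U) - ennreal (Phi_e L)"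
    by (simp add: ennreal_add_diff_cancel_left)
  then show ?thesis
    by (simp add: ennreal_minus Phi_e_nonneg)
qed

lemma Phi_e_mono:
  assumes "L \<le> U"
  shows "Phi_e L \<le> Phi_e U"
proof -
  have "normal_mass 0 1 {t. ereal t < L} \<le> normal_mass 0 1 {t. ereal t < U}"
    unfolding normal_mass_def using assms
    by (intro nn_integral_mono) (auto split: split_indicator)
  then show ?thesis
    by (simp add: normal_mass_std_less Phi_e_nonneg)
qed

lemma has_real_derivative_Phi_e: "((\<lambda>x. Phi_e (ereal x)) has_real_derivative std_normal_density x) (at x)"
proof -
  have Phi_LBINT: "Phi_e (ereal y) = (LBINT t = -\<infinity>..ereal y. std_normal_density t)" for y
  proof -
    have "(LBINT t = -\<infinity>..ereal y. std_normal_density t) = (\<integral>t. std_normal_density t * indicator {..<y} t \<partial>lborel)"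
      by (simp add: interval_lebesgue_integral_def set_lebesgue_integral_def mult.commute)
    also have "\<dots> = Phi_e (ereal y)"
      unfolding Phi_e_ereal using AE_lborel_singleton[of y]
      by (intro integral_cong_AE) (auto split: split_indicator elim!: eventually_mono)
    finally show ?thesis ..
  qed
  have Phi_eq: "Phi_e (ereal y) = Phi_e (ereal 0) + (LBINT t = ereal 0..ereal y. std_normal_density t)" for y
    unfolding Phi_LBINT
    by (rule interval_integral_sum[symmetric])
      (auto simp: interval_lebesgue_integrable_def set_integrable_def
        intro!: integrable_mult_indicator[where 'b=real, simplified])
  define a where "a = - \<bar>x\<bar> - 1"
  define b where "b = \<bar>x\<bar> + 1"
  have "continuous_on {a..b} std_normal_density"
    by (simp add: std_normal_density_def continuous_intros)
  then have "((\<lambda>y. LBINT t = ereal 0..y. std_normal_density t) has_vector_derivative std_normal_density x)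
          (at x within {a..b})"
    by (rule interval_integral_FTC2[rotated 2]) (auto simp: a_def b_def)
  then have "((\<lambda>y. LBINT t = ereal 0..y. std_normal_density t) has_vector_derivative std_normal_density x)
          (at x within {a<..<b})"
    by (rule has_vector_derivative_within_subset) auto
  then have "((\<lambda>y. LBINT t = ereal 0..y. std_normal_density t) has_vector_derivative std_normal_density x) (at x)"
    by (subst (asm) at_within_open) (auto simp: a_def b_def)
  then have "((\<lambda>y. Phi_e (ereal 0) + (LBINT t = ereal 0..y. std_normal_density t))
               has_real_derivative std_normal_density x) (at x)"
    by (auto intro!: derivative_eq_intros simp: has_real_derivative_iff_has_vector_derivative)
  then show ?thesis
    by (simp only: Phi_eq[symmetric])
qed

lemma Phi_e_strict_mono:
  assumes "L < U"
  shows "Phi_e L < Phi_e U"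
proof -
  obtain a where a: "L < ereal a" "ereal a < U"
    using ereal_dense2[OF assms] by blast
  obtain b where b: "ereal a < ereal b" "ereal b < U"
    using ereal_dense2[OF a(2)] by blast
  then have "a < b"
    by simp
  have "Phi_e (ereal a) < Phi_e (ereal b)"
  proof (rule DERIV_pos_imp_increasing[where f="\<lambda>x. Phi_e (ereal x)", OF \<open>a < b\<close>])
    show "\<exists>y. ((\<lambda>x. Phi_e (ereal x)) has_real_derivative y) (at x) \<and> 0 < y" for x
      by (rule exI[of _ "std_normal_density x"]) (simp add: has_real_derivative_Phi_e normal_density_pos)
  qed
  then show ?thesis
    using Phi_e_mono[OF less_imp_le[OF a(1)]] Phi_e_mono[OF less_imp_le[OF b(2)]] by linarith
qed

lemma norm_thr_le_iff: "0 < s \<Longrightarrow> L \<le> ereal (z + s * x) \<longleftrightarrow> norm_thr L z s \<le> ereal x"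
  by (cases L) (auto simp: norm_thr_def field_simps)

lemma norm_thr_less_iff: "0 < s \<Longrightarrow> ereal (z + s * x) < U \<longleftrightarrow> ereal x < norm_thr U z s"
  by (cases U) (auto simp: norm_thr_def field_simps)

lemma norm_thr_mono: "0 < s \<Longrightarrow> L \<le> U \<Longrightarrow> norm_thr L z s \<le> norm_thr U z s"
  by (cases L; cases U) (auto simp: norm_thr_def divide_right_mono)

lemma norm_thr_strict_mono: "0 < s \<Longrightarrow> L < U \<Longrightarrow> norm_thr L z s < norm_thr U z s"
  by (cases L; cases U) (auto simp: norm_thr_def divide_strict_right_mono)

lemma ereal_interval_borel: "{x::real. L \<le> ereal x \<and> ereal x < U} \<in> sets borel"
proof -
  have "ereal \<in> borel_measurable borel"
    by (intro borel_measurable_continuous_onI continuous_intros)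
  then have "ereal -` {L..<U} \<inter> space borel \<in> sets borel"
    by (rule measurable_sets) simp
  then show ?thesis
    by (simp add: vimage_def)
qed

definition interval_prob :: "ereal \<Rightarrow> ereal \<Rightarrow> real \<Rightarrow> real \<Rightarrow> real" where
  "interval_prob L U z s = Phi_e (norm_thr U z s) - Phi_e (norm_thr L z s)"

lemma interval_prob_nonneg: "0 < s \<Longrightarrow> L \<le> U \<Longrightarrow> 0 \<le> interval_prob L U z s"
  by (simp add: interval_prob_def Phi_e_mono norm_thr_mono)

lemma interval_prob_pos: "0 < s \<Longrightarrow> L < U \<Longrightarrow> 0 < interval_prob L U z s"
  by (simp add: interval_prob_def Phi_e_strict_mono norm_thr_strict_mono)

lemma normal_mass_ereal_interval:
  assumes s: "0 < s" and "L \<le> U"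
  shows "normal_mass z s {x. L \<le> ereal x \<and> ereal x < U} = ennreal (interval_prob L U z s)"
proof -
  have "normal_mass z s {x. L \<le> ereal x \<and> ereal x < U}
      = normal_mass 0 1 {t. norm_thr L z s \<le> ereal t \<and> ereal t < norm_thr U z s}"
    unfolding normal_mass_standardize[OF s ereal_interval_borel]
    by (simp add: normal_mass_def indicator_def norm_thr_le_iff[OF s] norm_thr_less_iff[OF s])
  also have "\<dots> = ennreal (interval_prob L U z s)"
    unfolding interval_prob_def using assms by (intro normal_mass_std_interval norm_thr_mono)
  finally show ?thesis .
qed

lemma has_real_derivative_Phi_e_norm_thr:
  assumes s: "0 < s"
  shows "((\<lambda>z. Phi_e (norm_thr E z s)) has_real_derivative
           - gauss_exp_e (norm_thr E z s) / (sqrt (2 * pi) * s)) (at z)"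
proof (cases E)
  case (real u)
  have "((\<lambda>z. Phi_e (ereal ((u - z) / s))) has_real_derivative
          std_normal_density ((u - z) / s) * (- 1 / s)) (at z)"
    using s by (intro DERIV_chain2[OF has_real_derivative_Phi_e]) (auto intro!: derivative_eq_intros)
  then show ?thesis
    by (simp add: real norm_thr_def std_normal_density_def gauss_exp_e_def)
qed (simp_all add: norm_thr_def gauss_exp_e_def)

lemma has_real_derivative_interval_prob:
  assumes "0 < s"
  shows "((\<lambda>z. interval_prob L U z s) has_real_derivative
           (gauss_exp_e (norm_thr L z s) - gauss_exp_e (norm_thr U z s)) / (sqrt (2 * pi) * s)) (at z)"
  unfolding interval_prob_def
  using DERIV_diff[OF has_real_derivative_Phi_e_norm_thr[OF assms] has_real_derivative_Phi_e_norm_thr[OF assms]]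
  by (simp add: diff_divide_distrib)

lemma nn_integral_lborel_prod_vec:
  fixes f :: "'a::finite \<Rightarrow> real \<Rightarrow> ennreal"
  assumes [measurable]: "\<And>a. f a \<in> borel_measurable borel"
  shows "(\<integral>\<^sup>+x. (\<Prod>a\<in>UNIV. f a (x $ a)) \<partial>(lborel :: (real^'a) measure))
       = (\<Prod>a\<in>UNIV. \<integral>\<^sup>+t. f a t \<partial>lborel)"
proof -
  have Basis_vec: "(Basis :: (real^'a) set) = (\<lambda>a. axis a 1) ` UNIV"
    by (auto simp: Basis_vec_def)
  have inj_axis: "inj (\<lambda>a::'a. axis a (1::real))"
    by (auto intro!: injI simp: axis_eq_axis)
  define g where "g b = f (SOME a. b = axis a 1)" for b :: "real^'a"
  have g: "g (axis a 1) = f a" for a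
    unfolding g_def by (rule arg_cong[where f=f], rule some_equality) (auto simp: axis_eq_axis)
  have "(\<integral>\<^sup>+x. (\<Prod>b\<in>Basis. g b (x \<bullet> b)) \<partial>(lborel :: (real^'a) measure))
      = (\<Prod>b\<in>Basis. \<integral>\<^sup>+t. g b t \<partial>lborel)"
    by (rule nn_integral_lborel_prod) (auto simp: Basis_vec g)
  then show ?thesis
    unfolding Basis_vec prod.reindex[OF inj_axis] by (simp add: g inner_axis)
qed

lemma indicator_box_vec:
  "(indicator (box l u) (x::real^'a) :: ennreal) = (\<Prod>a\<in>UNIV. indicator {l$a<..<u$a} (x$a))"
proof (cases "x \<in> box l u")
  case False
  then obtain a where "\<not> (l$a < x$a \<and> x$a < u$a)"
    by (auto simp: mem_box_cart)
  then have "(\<Prod>a\<in>UNIV. indicator {l$a<..<u$a} (x$a) :: ennreal) = 0"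
    by (intro prod_zero bexI[of _ a]) auto
  with False show ?thesis
    by simp
qed (simp add: mem_box_cart)

lemma measure_eqI_box:
  fixes M N :: "'a::euclidean_space measure"
  assumes sM: "sets M = sets borel" and sN: "sets N = sets borel"
    and fin: "emeasure M UNIV \<noteq> \<infinity>"
    and eq: "\<And>l u. emeasure M (box l u) = emeasure N (box l u)"
  shows "M = N"
proof (rule measure_eqI_generator_eq[where E="range (\<lambda>(a, b). box a b)" and \<Omega>=UNIV
      and A="\<lambda>n::nat. box (- (real n *\<^sub>R One)) (real n *\<^sub>R One)"])
  show "Int_stable (range (\<lambda>(a, b). box a b::'a set))"
    by (auto simp: Int_stable_def box_Int_box)
  show "sets M = sigma_sets UNIV (range (\<lambda>(a, b). box a b))"
    "sets N = sigma_sets UNIV (range (\<lambda>(a, b). box a b))"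
    by (simp_all add: borel_eq_box sM sN)
  show "(\<Union>i. box (- (real i *\<^sub>R One)) (real i *\<^sub>R One)) = (UNIV::'a set)"
    unfolding UN_box_eq_UNIV by auto
  have "space M = UNIV"
    using sM by (metis sets_eq_imp_space_eq space_borel)
  then show "emeasure M (box (- (real i *\<^sub>R One)) (real i *\<^sub>R One)) \<noteq> \<infinity>" for i
    using emeasure_space[of M] fin by (metis infinity_ennreal_def top.extremum_uniqueI)
qed (use eq in auto)

definition std_normal_density_vec :: "real^'a \<Rightarrow> real" where
  "std_normal_density_vec x = (\<Prod>a\<in>UNIV. std_normal_density (x $ a))"

lemma borel_measurable_std_normal_density_vec [measurable]:
  "std_normal_density_vec \<in> borel_measurable borel"
  unfolding std_normal_density_vec_def[abs_def] by measurable

lemma ennreal_std_normal_density_vec: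
  "ennreal (std_normal_density_vec x) = (\<Prod>a\<in>UNIV. ennreal (std_normal_density (x $ a)))"
  by (simp add: std_normal_density_vec_def prod_ennreal)

lemma std_normal_density_vec_eq_norm:
  "std_normal_density_vec (w::real^'a) = (1 / sqrt (2 * pi)) ^ CARD('a) * exp (- (norm w)\<^sup>2 / 2)"
proof -
  have "(norm w)\<^sup>2 = (\<Sum>a\<in>UNIV. (w $ a)\<^sup>2)"
    by (simp only: power2_norm_eq_inner) (simp add: inner_vec_def power2_eq_square)
  then have "exp (- (norm w)\<^sup>2 / 2) = (\<Prod>a\<in>UNIV. exp (- (w $ a)\<^sup>2 / 2))"
    by (simp add: exp_sum[symmetric] sum_negf sum_divide_distrib)
  then show ?thesis
    by (simp add: std_normal_density_vec_def std_normal_density_def prod_dividef power_one_over)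
qed

lemma std_normal_density_vec_orthogonal_transformation:
  fixes T :: "real^'a \<Rightarrow> real^'a"
  shows "orthogonal_transformation T \<Longrightarrow> std_normal_density_vec (T w) = std_normal_density_vec w"
  by (simp add: std_normal_density_vec_eq_norm orthogonal_transformation_norm)

lemma nn_integral_std_normal_density_vec_coordinates:
  fixes \<pi> :: "'m::finite \<Rightarrow> 'a::finite" and G :: "'m \<Rightarrow> real \<Rightarrow> ennreal"
  assumes inj: "inj_on \<pi> R" and [measurable]: "\<And>m. G m \<in> borel_measurable borel"
  shows "(\<integral>\<^sup>+w. (\<Prod>m\<in>R. G m (w $ \<pi> m)) * ennreal (std_normal_density_vec w) \<partial>lborel)
       = (\<Prod>m\<in>R. \<integral>\<^sup>+t. G m t * ennreal (std_normal_density t) \<partial>lborel)"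
proof -
  define \<rho> where "\<rho> = the_inv_into R \<pi>"
  have \<rho>: "\<rho> (\<pi> m) = m" if "m \<in> R" for m
    unfolding \<rho>_def using inj that by (rule the_inv_into_f_f)
  define g where "g j t = (if j \<in> \<pi> ` R then G (\<rho> j) t else 1) * ennreal (std_normal_density t)"
    for j t
  have "(\<Prod>m\<in>R. G m (w $ \<pi> m)) = (\<Prod>j\<in>\<pi> ` R. G (\<rho> j) (w $ j))" for w :: "real^'a"
    by (simp add: prod.reindex[OF inj] \<rho>)
  also have "\<dots> w = (\<Prod>j\<in>UNIV. if j \<in> \<pi> ` R then G (\<rho> j) (w $ j) else 1)" for w
    by (simp add: prod.If_cases Int_absorb1)
  finally have "(\<Prod>m\<in>R. G m (w $ \<pi> m)) * ennreal (std_normal_density_vec w) = (\<Prod>j\<in>UNIV. g j (w $ j))"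
    for w
    by (simp add: g_def prod.distrib ennreal_std_normal_density_vec)
  then have "(\<integral>\<^sup>+w. (\<Prod>m\<in>R. G m (w $ \<pi> m)) * ennreal (std_normal_density_vec w) \<partial>lborel)
      = (\<integral>\<^sup>+w. (\<Prod>j\<in>UNIV. g j (w $ j)) \<partial>lborel)"
    by simp
  also have "\<dots> = (\<Prod>j\<in>UNIV. \<integral>\<^sup>+t. g j t \<partial>lborel)"
    by (rule nn_integral_lborel_prod_vec) (simp add: g_def)
  also have "\<dots> = (\<Prod>j\<in>UNIV. if j \<in> \<pi> ` R
                       then \<integral>\<^sup>+t. G (\<rho> j) t * ennreal (std_normal_density t) \<partial>lborel else 1)"
    by (intro prod.cong refl) (simp add: g_def nn_integral_std_normal_density)
  also have "\<dots> = (\<Prod>j\<in>\<pi> ` R. \<integral>\<^sup>+t. G (\<rho> j) t * ennreal (std_normal_density t) \<partial>lborel)"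
    by (simp add: prod.If_cases Int_absorb1)
  also have "\<dots> = (\<Prod>m\<in>R. \<integral>\<^sup>+t. G m t * ennreal (std_normal_density t) \<partial>lborel)"
    by (simp add: prod.reindex[OF inj] \<rho>)
  finally show ?thesis .
qed

lemma nn_integral_std_normal_density_vec:
  "(\<integral>\<^sup>+x. ennreal (std_normal_density_vec (x::real^'a)) \<partial>lborel) = 1"
  using nn_integral_std_normal_density_vec_coordinates[of id "{}::'a set" "\<lambda>_ _. 1"] by simp

lemma nn_integral_normal_density_vec_standardize:
  fixes \<mu> :: "real^'n"
  assumes s: "0 < s" and [measurable]: "g \<in> borel_measurable borel"
  shows "(\<integral>\<^sup>+x. g x * ennreal (\<Prod>i\<in>UNIV. normal_density (\<mu> $ i) s (x $ i)) \<partial>lborel)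
       = (\<integral>\<^sup>+x. g (\<mu> + s *\<^sub>R x) * ennreal (std_normal_density_vec x) \<partial>lborel)"
proof -
  have "s ^ CARD('n) * (\<Prod>i\<in>UNIV. normal_density (\<mu> $ i) s ((\<mu> + s *\<^sub>R x) $ i))
      = (\<Prod>i\<in>UNIV. s * normal_density (\<mu> $ i) s (\<mu> $ i + s * x $ i))" for x
    by (simp add: prod.distrib)
  then have "ennreal (s ^ CARD('n)) * ennreal (\<Prod>i\<in>UNIV. normal_density (\<mu> $ i) s ((\<mu> + s *\<^sub>R x) $ i))
      = ennreal (std_normal_density_vec x)" for x
    using s by (simp add: normal_density_standardize std_normal_density_vec_def prod_nonneg
        flip: ennreal_mult)
  then show ?thesis
    using s by (subst lborel_affine[of s \<mu>])
      (auto simp: nn_integral_density nn_integral_distr nn_integral_cmult[symmetric] ac_simps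
        intro!: nn_integral_cong)
qed

lemma nn_integral_std_normal_density_vec_marginal:
  fixes \<iota> :: "'a::finite \<Rightarrow> 'k::finite"
  assumes inj: "inj \<iota>" and [measurable]: "g \<in> borel_measurable borel"
  shows "(\<integral>\<^sup>+w. g (\<chi> a. w $ \<iota> a) * ennreal (std_normal_density_vec (w::real^'k)) \<partial>lborel)
       = (\<integral>\<^sup>+x. g x * ennreal (std_normal_density_vec (x::real^'a)) \<partial>lborel)"
proof -
  define pr :: "real^'k \<Rightarrow> real^'a" where "pr w = (\<chi> a. w $ \<iota> a)" for w
  have [measurable]: "pr \<in> borel_measurable borel"
    unfolding pr_def by (rule borel_measurable_continuous_onI) (intro continuous_intros)
  define M where "M = distr (density lborel (\<lambda>w::real^'k. ennreal (std_normal_density_vec w))) borel pr"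
  define N where "N = density lborel (\<lambda>x::real^'a. ennreal (std_normal_density_vec x))"
  have "M = N"
  proof (rule measure_eqI_box)
    show "sets M = sets borel" "sets N = sets borel"
      by (simp_all add: M_def N_def)
    show "emeasure M UNIV \<noteq> \<infinity>"
      by (simp add: M_def emeasure_distr emeasure_density nn_integral_std_normal_density_vec)
    fix l u :: "real^'a"
    define p where "p = (\<Prod>a\<in>UNIV. \<integral>\<^sup>+t. indicator {l$a<..<u$a} t * ennreal (std_normal_density t) \<partial>lborel)"
    have "emeasure M (box l u) = (\<integral>\<^sup>+x. indicator (box l u) x \<partial>M)"
      by (rule nn_integral_indicator[symmetric]) (simp add: M_def)
    also have "\<dots> = (\<integral>\<^sup>+w. indicator (box l u) (pr w) * ennreal (std_normal_density_vec w) \<partial>lborel)"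
      unfolding M_def by (subst nn_integral_distr) (auto simp: nn_integral_density mult.commute)
    also have "\<dots> = (\<integral>\<^sup>+w. (\<Prod>a\<in>UNIV. indicator {l$a<..<u$a} (w $ \<iota> a))
                        * ennreal (std_normal_density_vec w) \<partial>lborel)"
      by (simp add: indicator_box_vec pr_def)
    also have "\<dots> = p"
      unfolding p_def using inj by (intro nn_integral_std_normal_density_vec_coordinates) auto
    also have "p = emeasure N (box l u)"
      using nn_integral_std_normal_density_vec_coordinates[of id UNIV
          "\<lambda>a. indicator {l$a<..<u$a} :: real \<Rightarrow> ennreal"]
      by (simp add: p_def N_def emeasure_density indicator_box_vec mult.commute)
    finally show "emeasure M (box l u) = emeasure N (box l u)" .
  qed
  have "(\<integral>\<^sup>+w. g (pr w) * ennreal (std_normal_density_vec w) \<partial>lborel) = (\<integral>\<^sup>+x. g x \<partial>M)"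
    by (simp add: M_def nn_integral_distr nn_integral_density mult.commute)
  also have "\<dots> = (\<integral>\<^sup>+x. g x * ennreal (std_normal_density_vec x) \<partial>lborel)"
    by (simp add: \<open>M = N\<close> N_def nn_integral_density mult.commute)
  finally show ?thesis
    by (simp add: pr_def)
qed

section \<open>Rotation invariance\<close>

lemma borel_measurable_orthogonal_transformation:
  fixes T :: "'a::euclidean_space \<Rightarrow> 'a"
  shows "orthogonal_transformation T \<Longrightarrow> T \<in> borel_measurable borel"
  by (intro borel_measurable_continuous_onI linear_continuous_on
      linear_conv_bounded_linear[THEN iffD1] orthogonal_transformation_linear)

lemma lborel_distr_orthogonal_transformation:
  fixes T :: "real^'k::{finite,wellorder} \<Rightarrow> real^'k::_"
  assumes T: "orthogonal_transformation T"
  shows "distr lborel borel T = lborel"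
proof (rule lborel_eqI[symmetric])
  have T_meas: "T \<in> borel_measurable borel"
    using T by (rule borel_measurable_orthogonal_transformation)
  have T_inv: "orthogonal_transformation (inv T)"
    using T by (rule orthogonal_transformation_inv)
  fix l u :: "(real, 'k::{finite,wellorder}) vec"
  assume le: "\<And>b. b \<in> Basis \<Longrightarrow> l \<bullet> b \<le> u \<bullet> b"
  have pre: "T -` box l u = inv T ` box l u"
    using orthogonal_transformation_bij[OF T] by (simp add: bij_vimage_eq_inv_image)
  have "T -` box l u \<in> sets lborel"
    using measurable_sets[OF T_meas, of "box l u"] by simp
  then have "emeasure (distr lborel borel T) (box l u) = emeasure lebesgue (inv T ` box l u)"
    using T_meas by (simp add: emeasure_distr pre main_part_sets)
  also have "\<dots> = emeasure lebesgue (box l u)"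
    using measurable_orthogonal_image[OF T_inv] measure_orthogonal_image[OF T_inv]
    by (simp add: emeasure_eq_measure2)
  finally show "emeasure (distr lborel borel T) (box l u) = (\<Prod>b\<in>Basis. (u - l) \<bullet> b)"
    using le by (simp add: main_part_sets emeasure_lborel_box_eq)
qed simp

lemma nn_integral_std_normal_density_vec_orthogonal_transformation:
  fixes T :: "real^'k::{finite,wellorder} \<Rightarrow> real^'k::_"
  assumes T: "orthogonal_transformation T" and [measurable]: "g \<in> borel_measurable borel"
  shows "(\<integral>\<^sup>+w. g (T w) * ennreal (std_normal_density_vec w) \<partial>lborel)
       = (\<integral>\<^sup>+w. g w * ennreal (std_normal_density_vec w) \<partial>lborel)"
proof -
  have [measurable]: "T \<in> borel_measurable borel"
    using T by (rule borel_measurable_orthogonal_transformation)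
  have "(\<integral>\<^sup>+w. g w * ennreal (std_normal_density_vec w) \<partial>lborel)
      = (\<integral>\<^sup>+w. g w * ennreal (std_normal_density_vec w) \<partial>distr lborel borel T)"
    by (simp add: lborel_distr_orthogonal_transformation[OF T])
  also have "\<dots> = (\<integral>\<^sup>+w. g (T w) * ennreal (std_normal_density_vec w) \<partial>lborel)"
    by (simp add: nn_integral_distr std_normal_density_vec_orthogonal_transformation[OF T])
  finally show ?thesis ..
qed

lemma pairwise_orthogonal_normalize:
  fixes C :: "'a::real_inner set"
  assumes orth: "pairwise orthogonal C" and "0 \<notin> C"
  shows "pairwise orthogonal ((\<lambda>x. x /\<^sub>R norm x) ` C)" and "inj_on (\<lambda>x. x /\<^sub>R norm x) C"
proof -
  show "pairwise orthogonal ((\<lambda>x. x /\<^sub>R norm x) ` C)"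
    using orth by (force simp: pairwise_def orthogonal_clauses)
  show "inj_on (\<lambda>x. x /\<^sub>R norm x) C"
    unfolding inj_on_def
    by (metis orth \<open>0 \<notin> C\<close> inverse_nonzero_iff_nonzero norm_eq_zero orthogonal_scaleR
        orthogonal_self pairwise_def)
qed

lemma orthonormal_extension:
  fixes S :: "'a::euclidean_space set"
  assumes S: "pairwise orthogonal S" and unit: "\<And>x. x \<in> S \<Longrightarrow> norm x = 1"
  obtains B where "S \<subseteq> B" "pairwise orthogonal B" "\<And>x. x \<in> B \<Longrightarrow> norm x = 1"
    "finite B" "card B = DIM('a)"
proof -
  obtain U where U: "U \<inter> (insert 0 S) = {}" "pairwise orthogonal (S \<union> U)"
    "span (S \<union> U) = span (S \<union> UNIV)"
    using orthogonal_extension_strong[OF S] by blast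
  define C where "C = S \<union> U"
  have C0: "0 \<notin> C"
    using U(1) unit by (force simp: C_def)
  have C_ind: "independent C"
    using U(2) C0 by (simp add: C_def pairwise_orthogonal_independent)
  have C_span: "span C = UNIV"
    using U(3) by (simp add: C_def span_UNIV)
  have C_card: "card C = DIM('a)"
    using dim_eq_card_independent[OF C_ind] C_span by (metis dim_UNIV dim_span)
  let ?normalize = "\<lambda>x. x /\<^sub>R norm x"
  have "S \<subseteq> ?normalize ` C"
    using unit by (force simp: C_def image_iff)
  moreover have "norm (?normalize x) = 1" if "x \<in> C" for x
    using that C0 by (metis norm_sgn sgn_div_norm)
  ultimately show thesis
    using pairwise_orthogonal_normalize[OF U(2)[folded C_def] C0] independent_imp_finite[OF C_ind]
    by (intro that[of "?normalize ` C"]) (auto simp: card_image C_card)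
qed

lemma orthonormal_columns_rotation:
  fixes \<beta> :: "'k \<Rightarrow> real^'k"
  assumes \<beta>: "\<And>i j. \<beta> i \<bullet> \<beta> j = (if i = j then 1 else 0)"
  defines "P \<equiv> \<chi> i j. \<beta> j $ i"
  shows "orthogonal_transformation ((*v) P)" and "\<beta> k \<bullet> (P *v w) = w $ k"
proof -
  have "orthogonal_matrix P"
    by (simp add: orthogonal_matrix_orthonormal_columns column_def P_def norm_eq_1 orthogonal_def \<beta>)
  then show "orthogonal_transformation ((*v) P)"
    by (simp add: orthogonal_transformation_matrix)
  have "\<beta> k v* P = axis k 1"
    by (simp add: vec_eq_iff vector_matrix_mult_def P_def axis_def inner_vec_def \<beta>[symmetric] mult.commute)
  then show "\<beta> k \<bullet> (P *v w) = w $ k"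
    by (simp add: dot_lmul_matrix[symmetric] inner_axis')
qed

lemma orthonormal_family_coordinates:
  fixes u :: "'m \<Rightarrow> real^'k"
  assumes unit: "\<And>m. m \<in> R \<Longrightarrow> norm (u m) = 1"
    and orth: "\<And>m m'. m \<in> R \<Longrightarrow> m' \<in> R \<Longrightarrow> m \<noteq> m' \<Longrightarrow> u m \<bullet> u m' = 0"
  obtains T :: "real^'k \<Rightarrow> real^'k" and \<pi> :: "'m \<Rightarrow> 'k"
  where "orthogonal_transformation T" "inj_on \<pi> R"
    "\<And>m w. m \<in> R \<Longrightarrow> u m \<bullet> T w = w $ \<pi> m"
proof -
  have u_inj: "inj_on u R"
    using unit orth by (intro inj_onI) (metis norm_eq_1 zero_neq_one)
  have "pairwise orthogonal (u ` R)"
    using orth by (auto simp: pairwise_def orthogonal_def)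
  then obtain B where B: "u ` R \<subseteq> B" "pairwise orthogonal B" "\<And>x. x \<in> B \<Longrightarrow> norm x = 1"
    "finite B" "card B = DIM(real^'k)"
    using orthonormal_extension unit by blast
  then obtain \<beta> where \<beta>: "bij_betw \<beta> (UNIV :: 'k set) B"
    by (metis bij_betw_iff_card finite DIM_cart DIM_real mult_1_right)
  have \<beta>_inner: "\<beta> i \<bullet> \<beta> j = (if i = j then 1 else 0)" for i j
  proof (cases "i = j")
    case True
    then show ?thesis
      using B(3) bij_betwE[OF \<beta>] by (simp add: norm_eq_1)
  next
    case False
    then have "\<beta> i \<noteq> \<beta> j"
      using \<beta> by (auto simp: bij_betw_def dest: injD)
    then show ?thesis
      using B(2) bij_betwE[OF \<beta>] False by (auto simp: pairwise_def orthogonal_def)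
  qed
  define \<pi> where "\<pi> m = inv_into UNIV \<beta> (u m)" for m
  have \<beta>\<pi>: "\<beta> (\<pi> m) = u m" if "m \<in> R" for m
    using that B(1) \<beta> unfolding \<pi>_def by (metis bij_betw_inv_into_right image_subset_iff)
  then have "inj_on \<pi> R"
    by (metis inj_onI u_inj inj_onD)
  moreover have "u m \<bullet> ((\<chi> i j. \<beta> j $ i) *v w) = w $ \<pi> m" if "m \<in> R" for m w
    using orthonormal_columns_rotation(2)[OF \<beta>_inner] by (simp flip: \<beta>\<pi>[OF that])
  ultimately show thesis
    using that orthonormal_columns_rotation(1)[OF \<beta>_inner] by blast
qed

lemma nn_integral_std_normal_density_vec_prod_orthogonal_wellorder:
  fixes b :: "'m::finite \<Rightarrow> real^'k::{finite,wellorder}" and F :: "'m \<Rightarrow> real \<Rightarrow> ennreal"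
  assumes orth: "\<And>i j. i \<noteq> j \<Longrightarrow> b i \<bullet> b j = 0"
    and [measurable]: "\<And>m. F m \<in> borel_measurable borel"
  shows "(\<integral>\<^sup>+w. (\<Prod>m\<in>UNIV. F m (b m \<bullet> w)) * ennreal (std_normal_density_vec w) \<partial>lborel)
       = (\<Prod>m\<in>UNIV. \<integral>\<^sup>+t. F m (norm (b m) * t) * ennreal (std_normal_density t) \<partial>lborel)"
proof -
  define R where "R = {m. b m \<noteq> 0}"
  obtain T :: "(real, 'k::{finite,wellorder}) vec \<Rightarrow> (real, 'k) vec" and \<pi> :: "'m \<Rightarrow> 'k"
    where T: "orthogonal_transformation T" and \<pi>: "inj_on \<pi> R"
    and coord: "\<And>m w. m \<in> R \<Longrightarrow> (b m /\<^sub>R norm (b m)) \<bullet> T w = w $ \<pi> m"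
    by (rule orthonormal_family_coordinates[of R "\<lambda>m. b m /\<^sub>R norm (b m)"])
      (use orth in \<open>auto simp: R_def\<close>)
  have b_T: "b m \<bullet> T w = norm (b m) * w $ \<pi> m" for m w
    using coord[of m w] by (cases "m \<in> R") (auto simp: R_def field_simps)
  define C where "C = (\<Prod>m\<in>-R. F m 0)"
  have split: "(\<Prod>m\<in>UNIV. f m) = (\<Prod>m\<in>R. f m) * (\<Prod>m\<in>-R. f m)" for f :: "'m \<Rightarrow> ennreal"
    by (metis Compl_eq_Diff_UNIV finite mult.commute prod.subset_diff subset_UNIV)
  have "(\<integral>\<^sup>+w. (\<Prod>m\<in>UNIV. F m (b m \<bullet> w)) * ennreal (std_normal_density_vec w) \<partial>lborel)
      = (\<integral>\<^sup>+w. (\<Prod>m\<in>UNIV. F m (b m \<bullet> T w)) * ennreal (std_normal_density_vec w) \<partial>lborel)"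
    by (rule nn_integral_std_normal_density_vec_orthogonal_transformation[OF T, symmetric]) measurable
  also have "\<dots> = C * (\<integral>\<^sup>+w. (\<Prod>m\<in>R. F m (norm (b m) * w $ \<pi> m))
                            * ennreal (std_normal_density_vec w) \<partial>lborel)"
    by (subst nn_integral_cmult[symmetric]) (auto simp: b_T split C_def R_def ac_simps)
  also have "\<dots> = C * (\<Prod>m\<in>R. \<integral>\<^sup>+t. F m (norm (b m) * t) * ennreal (std_normal_density t) \<partial>lborel)"
    using \<pi> by (subst nn_integral_std_normal_density_vec_coordinates) auto
  also have "C = (\<Prod>m\<in>-R. \<integral>\<^sup>+t. F m (norm (b m) * t) * ennreal (std_normal_density t) \<partial>lborel)"
    by (simp add: C_def R_def nn_integral_cmult nn_integral_std_normal_density)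
  finally show ?thesis
    by (simp add: split mult.commute)
qed

lemma nn_integral_std_normal_density_vec_prod_orthogonal:
  fixes b :: "'m::finite \<Rightarrow> real^'n" and F :: "'m \<Rightarrow> real \<Rightarrow> ennreal"
  assumes orth: "\<And>i j. i \<noteq> j \<Longrightarrow> b i \<bullet> b j = 0"
    and [measurable]: "\<And>m. F m \<in> borel_measurable borel"
  shows "(\<integral>\<^sup>+w. (\<Prod>m\<in>UNIV. F m (b m \<bullet> w)) * ennreal (std_normal_density_vec w) \<partial>lborel)
       = (\<Prod>m\<in>UNIV. \<integral>\<^sup>+t. F m (norm (b m) * t) * ennreal (std_normal_density t) \<partial>lborel)"
proof -
  txt \<open>The library proves rotation invariance of Lebesgue measure only for well-ordered index
    types, so \<open>'n\<close> is embedded into \<open>'n bit0\<close> and the \<open>b m\<close> are padded with zeros.\<close>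
  obtain \<iota> :: "'n \<Rightarrow> 'n bit0" where \<iota>: "inj \<iota>"
    by (metis card_le_inj finite card_bit0 le_add1 mult_2)
  define b' :: "'m \<Rightarrow> real^'n bit0" where "b' m = (\<chi> j. if j \<in> range \<iota> then b m $ inv \<iota> j else 0)" for m
  have b'_inner: "b' m \<bullet> w = b m \<bullet> (\<chi> a. w $ \<iota> a)" for m w
  proof -
    have "b' m \<bullet> w = (\<Sum>j\<in>range \<iota>. b m $ inv \<iota> j * w $ j)"
      by (simp add: b'_def inner_vec_def if_distrib[of "\<lambda>x. x * _"] sum.If_cases Int_absorb1 cong: if_cong)
    also have "\<dots> = b m \<bullet> (\<chi> a. w $ \<iota> a)"
      by (simp add: sum.reindex[OF \<iota>] inner_vec_def inv_f_f[OF \<iota>])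
    finally show ?thesis .
  qed
  have "(\<chi> a. b' j $ \<iota> a) = b j" for j
    by (simp add: b'_def vec_eq_iff inv_f_f[OF \<iota>])
  then have b'_b': "b' i \<bullet> b' j = b i \<bullet> b j" for i j
    by (simp add: b'_inner)
  have "(\<integral>\<^sup>+w. (\<Prod>m\<in>UNIV. F m (b m \<bullet> w)) * ennreal (std_normal_density_vec w) \<partial>lborel)
      = (\<integral>\<^sup>+w. (\<Prod>m\<in>UNIV. F m (b' m \<bullet> w)) * ennreal (std_normal_density_vec w) \<partial>lborel)"
    unfolding b'_inner by (rule nn_integral_std_normal_density_vec_marginal[OF \<iota>, symmetric]) measurable
  also have "\<dots> = (\<Prod>m\<in>UNIV. \<integral>\<^sup>+t. F m (norm (b' m) * t) * ennreal (std_normal_density t) \<partial>lborel)"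
    by (rule nn_integral_std_normal_density_vec_prod_orthogonal_wellorder) (simp_all add: b'_b' orth)
  finally show ?thesis
    by (simp add: norm_eq_sqrt_inner b'_b')
qed

section \<open>The noise-perturbed likelihood\<close>

lemma quant_lik_eq_prod_normal_mass:
  fixes A :: "real^'n^'m" and Q :: "real \<Rightarrow> 'c" and I :: "'m \<Rightarrow> real set"
  assumes QI: "\<And>m x. Q x = ybar $ m \<longleftrightarrow> x \<in> I m" and [measurable]: "\<And>m. I m \<in> sets borel"
  shows "quant_lik A \<sigma> Q ybar h0 = enn2real (\<Prod>m\<in>UNIV. normal_mass ((A *v h0) $ m) \<sigma> (I m))"
proof -
  let ?y = "A *v h0"
  have "indicator {n. \<forall>m. Q (?y $ m + n $ m) = ybar $ m} n = (\<Prod>m\<in>UNIV. indicator (I m) (?y $ m + n $ m) :: real)"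
    for n :: "real^'m"
    by (auto simp: indicator_def QI)
  then have "quant_lik A \<sigma> Q ybar h0
      = (\<integral>n. (\<Prod>m\<in>UNIV. normal_density 0 \<sigma> (n $ m) * indicator (I m) (?y $ m + n $ m)) \<partial>lborel)"
    by (simp add: quant_lik_def prod.distrib mult.commute)
  also have "\<dots> = enn2real (\<integral>\<^sup>+n. ennreal (\<Prod>m\<in>UNIV. normal_density 0 \<sigma> (n $ m)
                                     * indicator (I m) (?y $ m + n $ m)) \<partial>lborel)"
    by (rule integral_eq_nn_integral) (auto intro!: prod_nonneg)
  also have "(\<integral>\<^sup>+n. ennreal (\<Prod>m\<in>UNIV. normal_density 0 \<sigma> (n $ m) * indicator (I m) (?y $ m + n $ m)) \<partial>lborel)
      = (\<integral>\<^sup>+n. (\<Prod>m\<in>UNIV. ennreal (normal_density 0 \<sigma> (n $ m)) * indicator (I m) (?y $ m + n $ m)) \<partial>lborel)"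
    by (intro nn_integral_cong) (simp add: prod_ennreal[symmetric] ennreal_mult ennreal_indicator)
  also have "\<dots> = (\<Prod>m\<in>UNIV. normal_mass (?y $ m) \<sigma> (I m))"
    by (subst nn_integral_lborel_prod_vec) (simp_all add: normal_mass_shift)
  finally show ?thesis .
qed

lemma pert_lik_eq_nn_integral_std_normal_density_vec:
  fixes A :: "real^'n^'m" and Q :: "real \<Rightarrow> 'c" and I :: "'m \<Rightarrow> real set"
  assumes QI: "\<And>m x. Q x = ybar $ m \<longleftrightarrow> x \<in> I m" and [measurable]: "\<And>m. I m \<in> sets borel"
    and \<sigma>: "0 < \<sigma>" and abar: "0 < abar" "abar < 1"
  shows "pert_lik A \<sigma> abar Q ybar ht = enn2real (\<integral>\<^sup>+w.
           (\<Prod>m\<in>UNIV. normal_mass (((1 / sqrt abar) *\<^sub>R (A *v ht)) $ m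
                                     + sqrt ((1 - abar) / abar) * (A $ m \<bullet> w)) \<sigma> (I m))
           * ennreal (std_normal_density_vec w) \<partial>lborel)"
proof -
  define s where "s = sqrt ((1 - abar) / abar)"
  have s: "0 < s"
    using abar by (simp add: s_def)
  define \<mu> :: "real^'n" where "\<mu> = (1 / sqrt abar) *\<^sub>R ht"
  define lik where "lik h0 = (\<Prod>m\<in>UNIV. normal_mass ((A *v h0) $ m) \<sigma> (I m))" for h0
  have [measurable]: "lik \<in> borel_measurable borel"
    unfolding lik_def matrix_vector_mul_component by measurable
  have lik_finite: "lik h0 < top" for h0
    using prod_le_1[of UNIV "\<lambda>m. normal_mass ((A *v h0) $ m) \<sigma> (I m)"] normal_mass_le_1[OF \<sigma>]
    by (simp add: lik_def le_less_trans[OF _ ennreal_one_less_top])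
  define dens where "dens h0 = (\<Prod>i\<in>UNIV. normal_density (\<mu> $ i) s (h0 $ i))" for h0 :: "real^'n"
  have "pert_lik A \<sigma> abar Q ybar ht = (\<integral>h0. enn2real (lik h0) * dens h0 \<partial>lborel)"
    by (simp add: pert_lik_def lik_def dens_def \<mu>_def s_def quant_lik_eq_prod_normal_mass[OF QI])
  also have "\<dots> = enn2real (\<integral>\<^sup>+h0. ennreal (enn2real (lik h0) * dens h0) \<partial>lborel)"
    by (rule integral_eq_nn_integral) (auto simp: dens_def prod_nonneg)
  also have "(\<integral>\<^sup>+h0. ennreal (enn2real (lik h0) * dens h0) \<partial>lborel) = (\<integral>\<^sup>+h0. lik h0 * ennreal (dens h0) \<partial>lborel)"
    by (intro nn_integral_cong) (simp add: ennreal_mult dens_def prod_nonneg lik_finite ennreal_enn2real)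
  also have "\<dots> = (\<integral>\<^sup>+x. lik (\<mu> + s *\<^sub>R x) * ennreal (std_normal_density_vec x) \<partial>lborel)"
    unfolding dens_def using s by (rule nn_integral_normal_density_vec_standardize) measurable
  finally show ?thesis
    by (simp add: lik_def \<mu>_def s_def matrix_vector_right_distrib matrix_vector_mul_component
        scaleR_matrix_vector_assoc)
qed

lemma pert_lik_eq_prod_interval_prob:
  fixes A :: "real^'n^'m" and Q :: "real \<Rightarrow> 'c" and L U :: "'m \<Rightarrow> ereal"
  assumes QI: "\<And>m x. Q x = ybar $ m \<longleftrightarrow> L m \<le> ereal x \<and> ereal x < U m"
    and LU: "\<And>m. L m \<le> U m"
    and \<sigma>: "0 < \<sigma>" and abar: "0 < abar" "abar < 1"
    and orth: "\<And>i j. i \<noteq> j \<Longrightarrow> A $ i \<bullet> A $ j = 0"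
  shows "pert_lik A \<sigma> abar Q ybar ht
       = (\<Prod>m\<in>UNIV. interval_prob (L m) (U m) (((1 / sqrt abar) *\<^sub>R (A *v ht)) $ m)
                       (sqrt ((1 - abar) / abar * (norm (A $ m))\<^sup>2 + \<sigma>\<^sup>2)))"
proof -
  define I where "I m = {x. L m \<le> ereal x \<and> ereal x < U m}" for m
  have [measurable]: "I m \<in> sets borel" for m
    unfolding I_def by (rule ereal_interval_borel)
  define s where "s = sqrt ((1 - abar) / abar)"
  define z where "z = (1 / sqrt abar) *\<^sub>R (A *v ht)"
  define sig where "sig m = sqrt ((1 - abar) / abar * (norm (A $ m))\<^sup>2 + \<sigma>\<^sup>2)" for m
  have sig: "sig m = sqrt ((s * norm (A $ m))\<^sup>2 + \<sigma>\<^sup>2)" "0 < sig m" for m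
    using abar \<sigma> by (simp_all add: sig_def s_def power_mult_distrib add_nonneg_pos)
  have "pert_lik A \<sigma> abar Q ybar ht = enn2real (\<integral>\<^sup>+w. (\<Prod>m\<in>UNIV. normal_mass (z $ m + s * (A $ m \<bullet> w)) \<sigma> (I m))
                                          * ennreal (std_normal_density_vec w) \<partial>lborel)"
    unfolding z_def s_def using QI \<sigma> abar
    by (intro pert_lik_eq_nn_integral_std_normal_density_vec) (auto simp: I_def)
  also have "(\<integral>\<^sup>+w. (\<Prod>m\<in>UNIV. normal_mass (z $ m + s * (A $ m \<bullet> w)) \<sigma> (I m))
                     * ennreal (std_normal_density_vec w) \<partial>lborel)
      = (\<Prod>m\<in>UNIV. \<integral>\<^sup>+t. normal_mass (z $ m + s * (norm (A $ m) * t)) \<sigma> (I m)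
                          * ennreal (std_normal_density t) \<partial>lborel)"
    by (rule nn_integral_std_normal_density_vec_prod_orthogonal[OF orth]) measurable
  also have "\<dots> = (\<Prod>m\<in>UNIV. normal_mass (z $ m) (sig m) (I m))"
    using abar \<sigma> by (intro prod.cong refl)
      (simp add: normal_mass_convolution sig(1) s_def mult.assoc[symmetric])
  also have "\<dots> = ennreal (\<Prod>m\<in>UNIV. interval_prob (L m) (U m) (z $ m) (sig m))"
    by (simp add: I_def normal_mass_ereal_interval sig(2) LU interval_prob_nonneg prod_ennreal)
  finally have "pert_lik A \<sigma> abar Q ybar ht
      = enn2real (ennreal (\<Prod>m\<in>UNIV. interval_prob (L m) (U m) (z $ m) (sig m)))" .
  moreover have "0 \<le> (\<Prod>m\<in>UNIV. interval_prob (L m) (U m) (z $ m) (sig m))"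
    by (intro prod_nonneg) (simp add: interval_prob_nonneg sig(2) LU)
  ultimately show ?thesis
    by (simp add: z_def sig_def)
qed

lemma has_derivative_ln_prod_rows:
  fixes A :: "real^'n^'m" and c :: real and f f' :: "'m \<Rightarrow> real \<Rightarrow> real"
  assumes deriv: "\<And>m x. (f m has_real_derivative f' m x) (at x)"
    and pos: "\<And>m x. 0 < f m x"
  defines "z \<equiv> \<lambda>h. c *\<^sub>R (A *v h)"
  shows "((\<lambda>h. ln (\<Prod>m\<in>UNIV. f m (z h $ m))) has_derivative
           (\<lambda>v. (c *\<^sub>R (transpose A *v (\<chi> m. f' m (z h $ m) / f m (z h $ m)))) \<bullet> v)) (at h)"
proof -
  define g where "g = (\<chi> m. f' m (z h $ m) / f m (z h $ m))"
  have z: "z h' $ m = c * (A $ m \<bullet> h')" for h' m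
    by (simp add: z_def matrix_vector_mul_component)
  have "((\<lambda>h. ln (f m (c * (A $ m \<bullet> h)))) has_derivative (\<lambda>v. c * (A $ m \<bullet> v) * g $ m)) (at h)" for m
  proof -
    have "((\<lambda>x. ln (f m x)) has_real_derivative g $ m) (at (c * (A $ m \<bullet> h)))"
      using DERIV_chain2[OF DERIV_ln_divide[OF pos] deriv] by (simp add: g_def z)
    moreover have "((\<lambda>h. c * (A $ m \<bullet> h)) has_derivative (\<lambda>v. c * (A $ m \<bullet> v))) (at h)"
      by (auto intro!: derivative_eq_intros)
    ultimately show ?thesis
      by (rule DERIV_compose_FDERIV)
  qed
  then have "((\<lambda>h. \<Sum>m\<in>UNIV. ln (f m (z h $ m))) has_derivative (\<lambda>v. \<Sum>m\<in>UNIV. c * (A $ m \<bullet> v) * g $ m)) (at h)"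
    unfolding z by (rule has_derivative_sum)
  moreover have "(c *\<^sub>R (transpose A *v g)) \<bullet> v = (\<Sum>m\<in>UNIV. c * (A $ m \<bullet> v) * g $ m)" for v
  proof -
    have "(c *\<^sub>R (transpose A *v g)) \<bullet> v = c * (g \<bullet> (A *v v))"
      by (simp add: dot_lmul_matrix)
    then show ?thesis
      by (simp add: inner_vec_def matrix_vector_mul_component sum_distrib_left ac_simps)
  qed
  ultimately show ?thesis
    by (simp add: g_def ln_prod pos less_imp_neq[symmetric])
qed

theorem proposition2:
  fixes A :: "real^'n^'m"
    and sigma_n abar :: real
    and Q :: "real \<Rightarrow> 'c"
    and r_low r_up :: "'c \<Rightarrow> ereal"
    and ybar :: "'c^'m"
    and ht :: "real^'n"
  assumes sigma_pos: "sigma_n > 0"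
    and abar: "0 < abar" "abar < 1"
    and quant: "\<And>r. r \<in> range Q \<Longrightarrow>
                 r_low r < r_up r \<and> Q -` {r} = {x. r_low r \<le> ereal x \<and> ereal x < r_up r}"
    and ybar_codewords: "\<And>m. ybar $ m \<in> range Q"
    and row_orth: "\<And>i j. i \<noteq> j \<Longrightarrow> (A $ i) \<bullet> (A $ j) = 0"
  shows
    "let z = (1 / sqrt abar) *\<^sub>R (A *v ht);
         sig = (\<lambda>m. sqrt ((1 - abar) / abar * (norm (A $ m))\<^sup>2 + sigma_n\<^sup>2));
         yup = (\<lambda>m. norm_thr (r_up (ybar $ m)) (z $ m) (sig m));
         ylow = (\<lambda>m. norm_thr (r_low (ybar $ m)) (z $ m) (sig m));
         g = (\<chi> m. (gauss_exp_e (ylow m) - gauss_exp_e (yup m))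
                    / (sqrt (2 * pi) * sig m * (Phi_e (yup m) - Phi_e (ylow m))))
     in ((\<lambda>h. ln (pert_lik A sigma_n abar Q ybar h)) has_derivative
           (\<lambda>v. ((1 / sqrt abar) *\<^sub>R (transpose A *v g)) \<bullet> v)) (at ht)"
proof -
  define c where "c = 1 / sqrt abar"
  define sig where "sig m = sqrt ((1 - abar) / abar * (norm (A $ m))\<^sup>2 + sigma_n\<^sup>2)" for m
  define L where "L m = r_low (ybar $ m)" for m
  define U where "U m = r_up (ybar $ m)" for m
  have LU: "L m < U m" and QI: "Q x = ybar $ m \<longleftrightarrow> L m \<le> ereal x \<and> ereal x < U m" for m x
    using quant[OF ybar_codewords[of m]] by (auto simp: L_def U_def set_eq_iff)
  have sig: "0 < sig m" for m
    using sigma_pos abar by (simp add: sig_def add_nonneg_pos)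
  have "pert_lik A sigma_n abar Q ybar h
      = (\<Prod>m\<in>UNIV. interval_prob (L m) (U m) ((c *\<^sub>R (A *v h)) $ m) (sig m))" for h
    unfolding c_def sig_def
    using QI less_imp_le[OF LU] sigma_pos abar row_orth by (rule pert_lik_eq_prod_interval_prob)
  moreover have "((\<lambda>h. ln (\<Prod>m\<in>UNIV. interval_prob (L m) (U m) ((c *\<^sub>R (A *v h)) $ m) (sig m)))
      has_derivative (\<lambda>v. (c *\<^sub>R (transpose A *v (\<chi> m.
         (gauss_exp_e (norm_thr (L m) ((c *\<^sub>R (A *v ht)) $ m) (sig m))
          - gauss_exp_e (norm_thr (U m) ((c *\<^sub>R (A *v ht)) $ m) (sig m))) / (sqrt (2 * pi) * sig m)
         / interval_prob (L m) (U m) ((c *\<^sub>R (A *v ht)) $ m) (sig m)))) \<bullet> v)) (at ht)"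
    using has_real_derivative_interval_prob[OF sig] interval_prob_pos[OF sig LU]
    by (rule has_derivative_ln_prod_rows)
  ultimately show ?thesis
    by (simp add: Let_def c_def sig_def L_def U_def interval_prob_def divide_divide_eq_left)
qed

end
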